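(* Let $(G;\mathcal{B},\mathcal{S})$ be a planar tumor graph. Then: (1) for any pair $\{x,y\}$ of distinct vertices of $\mathcal{B}$ and any $z\in V(G)\setminus\{x,y\}$, we have $|N(z)\cap\mathcal{S}_{xy}|\le 2$; in particular, the number of edges of $G$ with both endpoints in $\mathcal{S}_{xy}$ is at most $|\mathcal{S}_{xy}|$; (2) $G$ has at most four edges between any fixed pair of distinct tumors.
   Context: A tumor graph is a triple $(G;\mathcal{B},\mathcal{S})$ where $G$ is a graph, $V(G)=\mathcal{B}\sqcup\mathcal{S}$, and every vertex in $\mathcal{S}$ has at most two neighbors in $\mathcal{B}$; it is planar if $G$ is planar. For distinct $x,y\in\mathcal{B}$, $\mathcal{S}_{xy}=\{s\in\mathcal{S}: N(s)\cap\mathcal{B}=\{x,y\}\}$; these sets are called tumors, and tumors $\mathcal{S}_{xy},\mathcal{S}_{zw}$ are distinct when $\{x,y\}\ne\{z,w\}$. $N(v)$ is the neighborhood of $v$ in $G$. *)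

theory Defs
  imports "HOL-Analysis.Analysis"
begin

definition simple_graph :: "'a set \<Rightarrow> ('a \<Rightarrow> 'a \<Rightarrow> bool) \<Rightarrow> bool" where
  "simple_graph V E \<longleftrightarrow> finite V \<and> (\<forall>u v. E u v \<longrightarrow> u \<in> V \<and> v \<in> V \<and> u \<noteq> v \<and> E v u)"

definition edges :: "('a \<Rightarrow> 'a \<Rightarrow> bool) \<Rightarrow> 'a set set" where
  "edges E = {{u, v} | u v. E u v}"

definition nbhd :: "'a set \<Rightarrow> ('a \<Rightarrow> 'a \<Rightarrow> bool) \<Rightarrow> 'a \<Rightarrow> 'a set" where
  "nbhd V E v = {w \<in> V. E v w}"

definition planar_graph :: "'a set \<Rightarrow> ('a \<Rightarrow> 'a \<Rightarrow> bool) \<Rightarrow> bool" where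
  "planar_graph V E \<longleftrightarrow>
    (\<exists>(pos :: 'a \<Rightarrow> complex) (\<gamma> :: 'a set \<Rightarrow> real \<Rightarrow> complex).
       inj_on pos V \<and>
       (\<forall>u v. E u v \<longrightarrow>
          arc (\<gamma> {u, v}) \<and>
          {pathstart (\<gamma> {u, v}), pathfinish (\<gamma> {u, v})} = {pos u, pos v} \<and>
          path_image (\<gamma> {u, v}) \<inter> pos ` V = {pos u, pos v}) \<and>
       (\<forall>e \<in> edges E. \<forall>e' \<in> edges E. e \<noteq> e' \<longrightarrow>
          path_image (\<gamma> e) \<inter> path_image (\<gamma> e') \<subseteq> pos ` V))"

definition tumor_graph :: "'a set \<Rightarrow> ('a \<Rightarrow> 'a \<Rightarrow> bool) \<Rightarrow> 'a set \<Rightarrow> 'a set \<Rightarrow> bool" where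
  "tumor_graph V E B S \<longleftrightarrow> simple_graph V E \<and> B \<union> S = V \<and> B \<inter> S = {} \<and>
     (\<forall>s \<in> S. card (nbhd V E s \<inter> B) \<le> 2)"

definition planar_tumor_graph :: "'a set \<Rightarrow> ('a \<Rightarrow> 'a \<Rightarrow> bool) \<Rightarrow> 'a set \<Rightarrow> 'a set \<Rightarrow> bool" where
  "planar_tumor_graph V E B S \<longleftrightarrow> tumor_graph V E B S \<and> planar_graph V E"

definition tumor :: "'a set \<Rightarrow> ('a \<Rightarrow> 'a \<Rightarrow> bool) \<Rightarrow> 'a set \<Rightarrow> 'a set \<Rightarrow> 'a \<Rightarrow> 'a \<Rightarrow> 'a set" where
  "tumor V E B S x y = {s \<in> S. nbhd V E s \<inter> B = {x, y}}"

definition edges_between :: "('a \<Rightarrow> 'a \<Rightarrow> bool) \<Rightarrow> 'a set \<Rightarrow> 'a set \<Rightarrow> 'a set set" where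
  "edges_between E X Y = {{u, v} | u v. E u v \<and> u \<in> X \<and> v \<in> Y}"

end

(*
  Both bounds come from the non-planarity of K33.  If some z outside {x, y} had three
  neighbours in S_xy, these three vertices and x, y, z would span a K33; the edge bound inside
  S_xy then follows by counting degrees.  Between two distinct tumors S_xy and S_zw every vertex
  has at most two neighbours on the other side, so five edges between them would contain three
  disjoint ones a_j b_j, and x, y, t (for t in {z, w} - {x, y}) together with the paths
  t b_j a_j would form a subdivided K33.

  K33 is not planar by the Jordan curve theorem: in a plane drawing, the hexagon
  p0 q0 p1 q1 p2 q2 is a Jordan curve, and any two of the remaining edges p0 q1, p1 q2, p2 q0
  have interleaved ends on it, hence lie on opposite sides -- impossible for three edges.
*)

theory Submission
  imports Defs
begin

section \<open>Arcs and theta curves\<close>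

definition arc_interior :: "(real \<Rightarrow> 'a::topological_space) \<Rightarrow> 'a set" where
  "arc_interior g = path_image g - {pathstart g, pathfinish g}"

lemma arc_interior_subset: "arc_interior g \<subseteq> path_image g"
  by (auto simp: arc_interior_def)

lemma arc_interior_reversepath [simp]: "arc_interior (reversepath g) = arc_interior g"
  by (auto simp: arc_interior_def)

lemma arc_interior_eq_image:
  assumes "arc g"
  shows "arc_interior g = g ` {0<..<1}"
proof -
  have "inj_on g {0..1}"
    using assms by (simp add: arc_def)
  then have "g t \<noteq> g 0" "g t \<noteq> g 1" if "0 < t" "t < 1" for t
    using that by (auto dest: inj_onD)
  then show ?thesis
    unfolding arc_interior_def path_image_def pathstart_def pathfinish_def
    by (force simp: less_le)
qed

lemma arc_interior_nonempty: "arc g \<Longrightarrow> arc_interior g \<noteq> {}"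
  by (simp add: arc_interior_eq_image)

lemma connected_arc_interior: "arc g \<Longrightarrow> connected (arc_interior g)"
  unfolding arc_interior_eq_image
  by (metis arc_imp_path path_def connected_Ioo connected_continuous_image continuous_on_subset
      greaterThanLessThan_subseteq_atLeastAtMost_iff order_refl)

lemma path_image_subset_closure_arc_interior:
  assumes "arc g"
  shows "path_image g \<subseteq> closure (arc_interior g)"
proof -
  have "continuous_on (closure {0<..<1::real}) g"
    using assms by (simp add: arc_def path_def)
  then have "g ` closure {0<..<1} \<subseteq> closure (g ` {0<..<1})"
    by (rule image_closure_subset) (simp_all add: closure_subset)
  then show ?thesis
    by (simp add: path_image_def arc_interior_eq_image[OF assms])
qed

lemma arc_ends_in_closure:
  assumes "arc d" "arc_interior d \<subseteq> X"
  shows "pathstart d \<in> closure X" "pathfinish d \<in> closure X"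
  using path_image_subset_closure_arc_interior[OF assms(1)] closure_mono[OF assms(2)]
    pathstart_in_path_image pathfinish_in_path_image by blast+

lemma connected_subset_inside_or_outside:
  assumes "connected S" "S \<inter> K = {}"
  shows "S \<subseteq> inside K \<or> S \<subseteq> outside K"
  using inside_outside_intersect_connected[OF assms(1), of K] assms(2) inside_Un_outside[of K]
  by blast

lemma Jordan_two_arcs:
  fixes A B :: "real \<Rightarrow> complex"
  assumes "arc A" "arc B" "pathstart A = u" "pathstart B = u" "pathfinish A = v" "pathfinish B = v"
    and "path_image A \<inter> path_image B \<subseteq> {u, v}"
  shows "inside (path_image A \<union> path_image B) \<noteq> {}"
    and "connected (inside (path_image A \<union> path_image B))"
    and "open (outside (path_image A \<union> path_image B))"
    and "connected (outside (path_image A \<union> path_image B))"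
    and "frontier (inside (path_image A \<union> path_image B)) = path_image A \<union> path_image B"
proof -
  have "simple_path (A +++ reversepath B)"
    using assms by (subst simple_path_join_loop_eq) (auto simp: arc_reversepath)
  moreover have "pathfinish (A +++ reversepath B) = pathstart (A +++ reversepath B)"
    using assms by simp
  moreover have "path_image (A +++ reversepath B) = path_image A \<union> path_image B"
    using assms by (simp add: path_image_join)
  ultimately show "inside (path_image A \<union> path_image B) \<noteq> {}"
    and "connected (inside (path_image A \<union> path_image B))"
    and "open (outside (path_image A \<union> path_image B))"
    and "connected (outside (path_image A \<union> path_image B))"
    and "frontier (inside (path_image A \<union> path_image B)) = path_image A \<union> path_image B"
    using Jordan_inside_outside by metis+
qed

locale theta_curve =
  fixes A B M :: "real \<Rightarrow> complex" and u v :: complex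
  assumes arcs: "arc A" "arc B" "arc M"
    and starts: "pathstart A = u" "pathstart B = u" "pathstart M = u"
    and finishes: "pathfinish A = v" "pathfinish B = v" "pathfinish M = v"
    and meet_AB: "path_image A \<inter> path_image B \<subseteq> {u, v}"
    and meet_AM: "path_image A \<inter> path_image M \<subseteq> {u, v}"
    and meet_BM: "path_image B \<inter> path_image M \<subseteq> {u, v}"
begin

lemma swap_AB: "theta_curve B A M u v"
  using meet_AB meet_AM meet_BM by unfold_locales (auto simp: arcs starts finishes)

lemma swap_BM: "theta_curve A M B u v"
  using meet_AB meet_AM meet_BM by unfold_locales (auto simp: arcs starts finishes)

lemma ends_in_path_images:
  "u \<in> path_image A" "v \<in> path_image A" "u \<in> path_image B" "v \<in> path_image B"
  "u \<in> path_image M" "v \<in> path_image M"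
  using starts finishes pathstart_in_path_image pathfinish_in_path_image by metis+

lemma arc_interior_disjoint:
  "arc_interior A \<inter> (path_image B \<union> path_image M) = {}"
  "arc_interior B \<inter> (path_image A \<union> path_image M) = {}"
  "arc_interior M \<inter> (path_image A \<union> path_image B) = {}"
  using meet_AB meet_AM meet_BM starts finishes by (auto simp: arc_interior_def)

lemma path_image_M_subset: "path_image M \<subseteq> arc_interior M \<union> path_image A"
  using starts finishes ends_in_path_images by (auto simp: arc_interior_def)

lemmas Jordan_AB = Jordan_two_arcs[OF arcs(1,2) starts(1,2) finishes(1,2) meet_AB]
lemmas Jordan_AM = Jordan_two_arcs[OF arcs(1,3) starts(1,3) finishes(1,3) meet_AM]
lemmas Jordan_BM = Jordan_two_arcs[OF arcs(2,3) starts(2,3) finishes(2,3) meet_BM]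

lemma compact_AB: "compact (path_image A \<union> path_image B)"
  by (simp add: arcs compact_Un compact_arc_image)

lemma inside_AB_subset_outside_BM:
  assumes A_out: "arc_interior A \<subseteq> outside (path_image B \<union> path_image M)"
    and M_not_in: "path_image M \<inter> inside (path_image A \<union> path_image B) = {}"
  shows "inside (path_image A \<union> path_image B) \<subseteq> outside (path_image B \<union> path_image M)"
proof -
  let ?I = "inside (path_image A \<union> path_image B)" and ?O = "outside (path_image B \<union> path_image M)"
  obtain q where q: "q \<in> arc_interior A"
    using arc_interior_nonempty[OF arcs(1)] by blast
  then have "q \<in> closure ?I"
    using Jordan_AB(5) arc_interior_subset frontier_def by fastforce
  then have "?O \<inter> ?I \<noteq> {}"
    using q A_out Jordan_BM(3) open_Int_closure_eq_empty by blast
  moreover have "?I \<inter> (path_image B \<union> path_image M) = {}"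
    using M_not_in inside_no_overlap by blast
  ultimately show ?thesis
    using connected_subset_inside_or_outside[OF Jordan_AB(2)] inside_Int_outside by blast
qed


lemma some_arc_inside:
  "arc_interior A \<subseteq> inside (path_image B \<union> path_image M) \<or>
   arc_interior B \<subseteq> inside (path_image A \<union> path_image M) \<or>
   arc_interior M \<subseteq> inside (path_image A \<union> path_image B)"
proof (rule ccontr)
  \<comment> \<open>Otherwise a point inside \<open>A \<union> B\<close> is joined to a far away point both outside
    \<open>B \<union> M\<close> and outside \<open>A \<union> M\<close>, hence, by Janiszewski's theorem, outside \<open>A \<union> B\<close>.\<close>
  let ?A = "path_image A" and ?B = "path_image B" and ?M = "path_image M"
  assume "\<not> ?thesis"
  then have A_out: "arc_interior A \<subseteq> outside (?B \<union> ?M)"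
    and B_out: "arc_interior B \<subseteq> outside (?A \<union> ?M)"
    and M_out: "arc_interior M \<subseteq> outside (?A \<union> ?B)"
    using connected_subset_inside_or_outside[OF connected_arc_interior] arcs arc_interior_disjoint
    by blast+
  have M_not_in: "?M \<inter> inside (?A \<union> ?B) = {}"
    using M_out path_image_M_subset inside_Int_outside inside_no_overlap by blast
  have in_out_BM: "inside (?A \<union> ?B) \<subseteq> outside (?B \<union> ?M)"
    by (rule inside_AB_subset_outside_BM[OF A_out M_not_in])
  have in_out_AM: "inside (?A \<union> ?B) \<subseteq> outside (?A \<union> ?M)"
    using theta_curve.inside_AB_subset_outside_BM[OF swap_AB] B_out M_not_in
    by (simp add: Un_commute)
  obtain x where x: "x \<in> inside (?A \<union> ?B)"
    using Jordan_AB(1) by blast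
  have "bounded (- outside (?A \<union> ?B) \<union> - outside (?B \<union> ?M) \<union> - outside (?A \<union> ?M))"
    by (simp add: arcs cobounded_outside bounded_Un bounded_arc_image)
  then obtain y where y: "y \<in> outside (?A \<union> ?B)" "y \<in> outside (?B \<union> ?M)" "y \<in> outside (?A \<union> ?M)"
    using not_bounded_UNIV bounded_subset by blast
  have "connected_component (- (?B \<union> ?M)) x y"
    using Jordan_BM(4) in_out_BM x y(2) outside_no_overlap by (blast intro: connected_componentI)
  moreover have "connected_component (- (?A \<union> ?M)) x y"
    using Jordan_AM(4) in_out_AM x y(3) outside_no_overlap by (blast intro: connected_componentI)
  moreover have "connected ((?B \<union> ?M) \<inter> (?A \<union> ?M))"
  proof -
    have "(?B \<union> ?M) \<inter> (?A \<union> ?M) = ?M"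
      using meet_AB ends_in_path_images by blast
    then show ?thesis
      by (simp add: arcs connected_arc_image)
  qed
  moreover have "compact (?B \<union> ?M)" "closed (?A \<union> ?M)"
    by (simp_all add: arcs compact_Un compact_arc_image closed_Un closed_arc_image)
  ultimately have "connected_component (- ((?B \<union> ?M) \<union> (?A \<union> ?M))) x y"
    using Janiszewski by blast
  then have "connected_component (- (?A \<union> ?B)) x y"
    by (rule connected_component_of_subset) auto
  then have "y \<in> inside (?A \<union> ?B)"
    using x unfolding inside_def
    by (metis (no_types, lifting) connected_component_eq mem_Collect_eq ComplD connected_component_in)
  then show False
    using y inside_Int_outside by blast
qed

context
  assumes M_inside: "arc_interior M \<subseteq> inside (path_image A \<union> path_image B)"
begin

lemma inside_split:
  "inside (path_image A \<union> path_image M) \<inter> inside (path_image B \<union> path_image M) = {}"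
  "inside (path_image A \<union> path_image M) \<union> inside (path_image B \<union> path_image M) \<union>
     (path_image M - {u, v}) = inside (path_image A \<union> path_image B)"
proof -
  have "u \<noteq> v"
    using arcs(1) starts(1) finishes(1) arc_distinct_ends by metis
  moreover have "path_image M \<inter> inside (path_image A \<union> path_image B) \<noteq> {}"
    using M_inside arc_interior_nonempty[OF arcs(3)] arc_interior_subset by blast
  moreover have "path_image A \<inter> path_image B = {u, v}" "path_image A \<inter> path_image M = {u, v}"
    "path_image B \<inter> path_image M = {u, v}"
    using meet_AB meet_AM meet_BM ends_in_path_images by blast+
  ultimately show
    "inside (path_image A \<union> path_image M) \<inter> inside (path_image B \<union> path_image M) = {}"
    "inside (path_image A \<union> path_image M) \<union> inside (path_image B \<union> path_image M) \<union>
       (path_image M - {u, v}) = inside (path_image A \<union> path_image B)"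
    using split_inside_simple_closed_curve[OF arc_imp_simple_path[OF arcs(1)] starts(1) finishes(1)
        arc_imp_simple_path[OF arcs(2)] starts(2) finishes(2)
        arc_imp_simple_path[OF arcs(3)] starts(3) finishes(3)]
    by blast+
qed

lemma connected_inside_AM_or_BM:
  assumes "connected S" "S \<subseteq> inside (path_image A \<union> path_image B)" "S \<inter> path_image M = {}"
  shows "S \<subseteq> inside (path_image A \<union> path_image M) \<or> S \<subseteq> inside (path_image B \<union> path_image M)"
proof -
  have "S \<inter> (path_image A \<union> path_image M) = {}"
    using assms(2,3) inside_no_overlap by blast
  then show ?thesis
    using connected_subset_inside_or_outside[OF assms(1)] assms(2) inside_split(2)
      inside_Int_outside outside_no_overlap by blast
qed

lemma no_arc_from_A_into_BM:
  assumes "arc d" "pathstart d \<in> arc_interior A"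
    and "arc_interior d \<subseteq> inside (path_image B \<union> path_image M)"
  shows False
proof -
  have "pathstart d \<in> path_image B \<union> path_image M \<union> inside (path_image B \<union> path_image M)"
    using arc_ends_in_closure[OF assms(1,3)] closure_inside_subset
      compact_imp_closed[OF theta_curve.compact_AB[OF swap_AB[THEN theta_curve.swap_BM]]]
    by blast
  then show False
    using assms(2) arc_interior_disjoint(1) arc_interior_subset inside_split(2) inside_no_overlap
    by blast
qed

lemma chord_AB_outside:
  assumes "arc d" "pathstart d \<in> arc_interior A" "pathfinish d \<in> arc_interior B"
    and "arc_interior d \<inter> (path_image A \<union> path_image B \<union> path_image M) = {}"
  shows "arc_interior d \<subseteq> outside (path_image A \<union> path_image B)"
proof -
  have "\<not> arc_interior d \<subseteq> inside (path_image A \<union> path_image B)"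
  proof
    assume "arc_interior d \<subseteq> inside (path_image A \<union> path_image B)"
    then consider "arc_interior d \<subseteq> inside (path_image A \<union> path_image M)"
      | "arc_interior d \<subseteq> inside (path_image B \<union> path_image M)"
      using connected_inside_AM_or_BM connected_arc_interior assms(1,4) by blast
    then show False
    proof cases
      case 1
      then show False
        using theta_curve.no_arc_from_A_into_BM[OF swap_AB, of "reversepath d"] M_inside assms
        by (simp add: Un_commute arc_reversepath)
    next
      case 2
      then show False
        using no_arc_from_A_into_BM assms by blast
    qed
  qed
  then show ?thesis
    using connected_subset_inside_or_outside[OF connected_arc_interior[OF assms(1)]] assms(4)
    by blast
qed

lemma chord_AM_inside:
  assumes "arc d" "pathstart d \<in> arc_interior A" "pathfinish d \<in> arc_interior M"
    and "arc_interior d \<inter> (path_image A \<union> path_image B \<union> path_image M) = {}"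
  shows "arc_interior d \<subseteq> inside (path_image A \<union> path_image M)"
proof -
  have "\<not> arc_interior d \<subseteq> outside (path_image A \<union> path_image B)"
  proof
    assume "arc_interior d \<subseteq> outside (path_image A \<union> path_image B)"
    then have "pathfinish d \<in> path_image A \<union> path_image B \<union> outside (path_image A \<union> path_image B)"
      using arc_ends_in_closure[OF assms(1)] closure_outside_subset compact_imp_closed[OF compact_AB]
      by blast
    then show False
      using assms(3) M_inside inside_no_overlap inside_Int_outside by blast
  qed
  then have "arc_interior d \<subseteq> inside (path_image A \<union> path_image B)"
    using connected_subset_inside_or_outside[OF connected_arc_interior[OF assms(1)]] assms(4)
    by blast
  moreover have "arc_interior d \<inter> path_image M = {}"
    using assms(4) by blast
  ultimately show ?thesis
    using connected_inside_AM_or_BM[OF connected_arc_interior[OF assms(1)]]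
      no_arc_from_A_into_BM[OF assms(1,2)] by blast
qed

end

lemma crossing_chord_sides:
  assumes "arc d" "pathstart d \<in> arc_interior A" "pathfinish d \<in> arc_interior B"
    and "arc_interior d \<inter> (path_image A \<union> path_image B \<union> path_image M) = {}"
  shows "arc_interior M \<subseteq> inside (path_image A \<union> path_image B) \<and>
           arc_interior d \<subseteq> outside (path_image A \<union> path_image B) \<or>
         arc_interior M \<subseteq> outside (path_image A \<union> path_image B) \<and>
           arc_interior d \<subseteq> inside (path_image A \<union> path_image B)"
proof -
  let ?A = "path_image A" and ?B = "path_image B" and ?M = "path_image M"
  have M_side: "arc_interior M \<subseteq> inside (?A \<union> ?B) \<or> arc_interior M \<subseteq> outside (?A \<union> ?B)"
    using connected_subset_inside_or_outside connected_arc_interior arcs(3) arc_interior_disjoint(3)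
    by blast
  have M_not_in: "\<not> arc_interior M \<subseteq> inside (?A \<union> ?B)"
    if "inside (?A \<union> ?B) \<subseteq> inside (X \<union> ?M)" for X
    using that arc_interior_nonempty[OF arcs(3)] arc_interior_subset inside_no_overlap by blast
  consider "arc_interior A \<subseteq> inside (?B \<union> ?M)" | "arc_interior B \<subseteq> inside (?A \<union> ?M)"
    | "arc_interior M \<subseteq> inside (?A \<union> ?B)"
    using some_arc_inside by blast
  then show ?thesis
  proof cases
    case 1
    interpret BMA: theta_curve B M A u v
      by (rule theta_curve.swap_BM[OF swap_AB])
    have "arc_interior d \<subseteq> inside (?A \<union> ?B)"
      using BMA.chord_AM_inside[OF 1, of "reversepath d"] assms
      by (simp add: arc_reversepath Un_commute Un_left_commute)
    moreover have "inside (?A \<union> ?B) \<subseteq> inside (?B \<union> ?M)"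
      using BMA.inside_split(2)[OF 1] by (auto simp: Un_commute)
    ultimately show ?thesis
      using M_side M_not_in by blast
  next
    case 2
    interpret AMB: theta_curve A M B u v
      by (rule swap_BM)
    have "arc_interior d \<subseteq> inside (?A \<union> ?B)"
      using AMB.chord_AM_inside[OF 2] assms by (simp add: Un_commute Un_left_commute)
    moreover have "inside (?A \<union> ?B) \<subseteq> inside (?A \<union> ?M)"
      using AMB.inside_split(2)[OF 2] by blast
    ultimately show ?thesis
      using M_side M_not_in by (metis Un_commute)
  next
    case 3
    then show ?thesis
      using chord_AB_outside assms by blast
  qed
qed

end

section \<open>Plane drawings of K33\<close>

lemma arc_join3:
  assumes "arc a" "arc b" "arc c" "pathfinish a = pathstart b" "pathfinish b = pathstart c"
    and "path_image a \<inter> path_image b \<subseteq> {pathstart b}"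
    and "path_image b \<inter> path_image c \<subseteq> {pathstart c}"
    and "path_image a \<inter> path_image c = {}"
  shows "arc (a +++ b +++ c)"
    and "path_image (a +++ b +++ c) = path_image a \<union> path_image b \<union> path_image c"
proof -
  have "arc (b +++ c)" "path_image (b +++ c) = path_image b \<union> path_image c"
    using assms by (simp_all add: arc_join path_image_join)
  then show "arc (a +++ b +++ c)"
    and "path_image (a +++ b +++ c) = path_image a \<union> path_image b \<union> path_image c"
    using assms by (auto intro!: arc_join simp: path_image_join)
qed

lemma UNIV_3_eq: "UNIV = {0, 1, 2 :: 3}"
  using exhaust_3 by fastforce

(* simp does not reduce numerals of type 3 modulo 3 by itself *)
lemma numerals_3 [simp]: "(3::3) = 0" "(4::3) = 1"
  by simp_all

(* The 6-cycle p0 q0 p1 q1 p2 q2 of K33; the remaining edges g k (k + 1) are its long diagonals. *)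
definition K33_hexagon :: "(3 \<Rightarrow> 3 \<Rightarrow> real \<Rightarrow> complex) \<Rightarrow> complex set" where
  "K33_hexagon g = (\<Union>k. path_image (g k k) \<union> path_image (g (k + 1) k))"

lemma K33_hexagon_shift: "K33_hexagon (\<lambda>i j. g (i + c) (j + c)) = K33_hexagon g"
proof -
  have "(\<Union>k. F (k + c)) = (\<Union>k. F k)" for F :: "3 \<Rightarrow> complex set"
    using surj_plus_right[of c] by (metis image_image)
  from this[of "\<lambda>k. path_image (g k k) \<union> path_image (g (k + 1) k)"] show ?thesis
    by (simp add: K33_hexagon_def ac_simps)
qed

locale K33_drawing =
  fixes p q :: "3 \<Rightarrow> complex" and g :: "3 \<Rightarrow> 3 \<Rightarrow> real \<Rightarrow> complex"
  assumes inj_p: "inj p" and inj_q: "inj q" and p_neq_q [simp]: "p i \<noteq> q j"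
    and arc_edge: "arc (g i j)"
    and edge_start [simp]: "pathstart (g i j) = p i"
    and edge_finish [simp]: "pathfinish (g i j) = q j"
    and edges_meet: "(i, j) \<noteq> (i', j') \<Longrightarrow>
      path_image (g i j) \<inter> path_image (g i' j') \<subseteq> {p i, q j} \<inter> {p i', q j'}"
begin

lemma p_eq_iff [simp]: "p i = p i' \<longleftrightarrow> i = i'"
  by (simp add: inj_p inj_eq)

lemma q_eq_iff [simp]: "q j = q j' \<longleftrightarrow> j = j'"
  by (simp add: inj_q inj_eq)

lemma q_neq_p [simp]: "q j \<noteq> p i"
  using p_neq_q by metis

lemma ends_in_edge [simp]: "p i \<in> path_image (g i j)" "q j \<in> path_image (g i j)"
  using pathstart_in_path_image[of "g i j"] pathfinish_in_path_image[of "g i j"] by simp_all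

lemma edges_meet_subset:
  "(i, j) \<noteq> (i', j') \<Longrightarrow> {p i, q j} \<inter> {p i', q j'} \<subseteq> C \<Longrightarrow>
    path_image (g i j) \<inter> path_image (g i' j') \<subseteq> C"
  using edges_meet by blast

lemma arc_interior_edge_disjoint:
  "(i, j) \<noteq> (i', j') \<Longrightarrow> arc_interior (g i j) \<inter> path_image (g i' j') = {}"
  using edges_meet[of i j i' j'] by (auto simp: arc_interior_def)

lemma shift: "K33_drawing (\<lambda>i. p (i + c)) (\<lambda>j. q (j + c)) (\<lambda>i j. g (i + c) (j + c))"
proof unfold_locales
  show "inj (\<lambda>i. p (i + c))" "inj (\<lambda>j. q (j + c))"
    by (simp_all add: inj_def)
qed (use arc_edge edges_meet in auto)

lemma zigzag:
  assumes "i \<noteq> i'" "j \<noteq> j'"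
  shows "arc (g i j +++ reversepath (g i' j) +++ g i' j')"
    and "path_image (g i j +++ reversepath (g i' j) +++ g i' j') =
      path_image (g i j) \<union> path_image (g i' j) \<union> path_image (g i' j')"
proof -
  have "path_image (g i j) \<inter> path_image (g i' j) \<subseteq> {q j}"
    "path_image (g i' j) \<inter> path_image (g i' j') \<subseteq> {p i'}"
    "path_image (g i j) \<inter> path_image (g i' j') \<subseteq> {}"
    by (rule edges_meet_subset; use assms in auto)+
  then show "arc (g i j +++ reversepath (g i' j) +++ g i' j')"
    and "path_image (g i j +++ reversepath (g i' j) +++ g i' j') =
      path_image (g i j) \<union> path_image (g i' j) \<union> path_image (g i' j')"
    using arc_join3[of "g i j" "reversepath (g i' j)" "g i' j'"]
    by (simp_all add: arc_edge arc_reversepath Int_commute)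
qed

lemma chords_on_opposite_sides:
  "arc_interior (g 0 1) \<subseteq> inside (K33_hexagon g) \<and> arc_interior (g 1 2) \<subseteq> outside (K33_hexagon g) \<or>
   arc_interior (g 0 1) \<subseteq> outside (K33_hexagon g) \<and> arc_interior (g 1 2) \<subseteq> inside (K33_hexagon g)"
proof -
  define P1 where "P1 = g 0 0 +++ reversepath (g 1 0) +++ g 1 1"
  define P2 where "P2 = g 0 2 +++ reversepath (g 2 2) +++ g 2 1"
  have P1: "arc P1" "path_image P1 = path_image (g 0 0) \<union> path_image (g 1 0) \<union> path_image (g 1 1)"
    "pathstart P1 = p 0" "pathfinish P1 = q 1"
    using zigzag[of 0 1 0 1] by (simp_all add: P1_def)
  have P2: "arc P2" "path_image P2 = path_image (g 0 2) \<union> path_image (g 2 2) \<union> path_image (g 2 1)"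
    "pathstart P2 = p 0" "pathfinish P2 = q 1"
    using zigzag[of 0 2 2 1] by (simp_all add: P2_def)
  interpret theta_curve P1 P2 "g 0 1" "p 0" "q 1"
  proof unfold_locales
    show "path_image P1 \<inter> path_image P2 \<subseteq> {p 0, q 1}"
      "path_image P1 \<inter> path_image (g 0 1) \<subseteq> {p 0, q 1}"
      "path_image P2 \<inter> path_image (g 0 1) \<subseteq> {p 0, q 1}"
      unfolding P1(2) P2(2) Int_Un_distrib Int_Un_distrib2 Un_subset_iff
      by (intro conjI edges_meet_subset; simp)+
  qed (simp_all add: P1 P2 arc_edge)
  have "K33_hexagon g = path_image P1 \<union> path_image P2"
    unfolding K33_hexagon_def P1(2) P2(2) UNIV_3_eq by auto
  moreover have "arc_interior (g 1 2) \<inter> (path_image P1 \<union> path_image P2 \<union> path_image (g 0 1)) = {}"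
    unfolding P1(2) P2(2) Int_Un_distrib by (simp add: arc_interior_edge_disjoint)
  moreover have "p 1 \<in> arc_interior P1" "q 2 \<in> arc_interior P2"
    by (simp_all add: arc_interior_def P1 P2)
  ultimately show ?thesis
    using crossing_chord_sides[of "g 1 2"] by (simp add: arc_edge)
qed

end

theorem no_K33_drawing: "\<not> K33_drawing p q g"
proof
  assume "K33_drawing p q g"
  then interpret K33_drawing p q g .
  have "arc_interior (g 0 1) \<noteq> {}" "arc_interior (g 1 2) \<noteq> {}" "arc_interior (g 2 0) \<noteq> {}"
    by (simp_all add: arc_edge arc_interior_nonempty)
  moreover note chords_on_opposite_sides
  \<comment> \<open>shifting all indices by 1 and by 2 turns the chords g01, g12 into g12, g20 and g20, g01\<close>
  moreover note K33_drawing.chords_on_opposite_sides[OF shift[of 1]]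
  moreover note K33_drawing.chords_on_opposite_sides[OF shift[of 2]]
  moreover have "\<not> (X \<subseteq> inside (K33_hexagon g) \<and> X \<subseteq> outside (K33_hexagon g))" if "X \<noteq> {}" for X
    using that inside_Int_outside by blast
  ultimately show False
    by (simp add: K33_hexagon_shift) blast
qed


section \<open>Plane embeddings of graphs\<close>

fun path_edges :: "'a list \<Rightarrow> 'a set set" where
  "path_edges (u # v # xs) = insert {u, v} (path_edges (v # xs))"
| "path_edges _ = {}"

lemma path_edgesE:
  assumes "e \<in> path_edges xs" "successively E xs"
  obtains a b where "e = {a, b}" "E a b" "a \<in> set xs" "b \<in> set xs"
  using assms by (induction xs rule: path_edges.induct) auto

lemma path_edges_subset: "e \<in> path_edges xs \<Longrightarrow> e \<subseteq> set xs"
  by (induction xs rule: path_edges.induct) auto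

lemma set_subset_path_edges: "2 \<le> length xs \<Longrightarrow> set xs \<subseteq> \<Union> (path_edges xs)"
proof (induction xs rule: path_edges.induct)
  case (1 u v xs)
  then show ?case
    by (cases xs) auto
qed auto

locale plane_embedding =
  fixes V :: "'a set" and E :: "'a \<Rightarrow> 'a \<Rightarrow> bool"
    and pos :: "'a \<Rightarrow> complex" and \<gamma> :: "'a set \<Rightarrow> real \<Rightarrow> complex"
  assumes graph: "simple_graph V E"
    and inj_pos: "inj_on pos V"
    and edge_arc: "E u v \<Longrightarrow> arc (\<gamma> {u, v}) \<and>
      {pathstart (\<gamma> {u, v}), pathfinish (\<gamma> {u, v})} = {pos u, pos v} \<and>
      path_image (\<gamma> {u, v}) \<inter> pos ` V = {pos u, pos v}"
    and edge_crossing: "e \<in> edges E \<Longrightarrow> e' \<in> edges E \<Longrightarrow> e \<noteq> e' \<Longrightarrow>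
      path_image (\<gamma> e) \<inter> path_image (\<gamma> e') \<subseteq> pos ` V"
begin

lemma edgeD: "E u v \<Longrightarrow> u \<in> V \<and> v \<in> V \<and> u \<noteq> v \<and> E v u"
  using graph by (auto simp: simple_graph_def)

lemma edge_images_meet:
  assumes "E u v" "E u' v'" "{u, v} \<noteq> {u', v'}"
  shows "path_image (\<gamma> {u, v}) \<inter> path_image (\<gamma> {u', v'}) \<subseteq> pos ` ({u, v} \<inter> {u', v'})"
proof
  fix x
  assume x: "x \<in> path_image (\<gamma> {u, v}) \<inter> path_image (\<gamma> {u', v'})"
  then have "x \<in> pos ` V"
    using edge_crossing[of "{u, v}" "{u', v'}"] assms by (auto simp: edges_def)
  then have "x \<in> {pos u, pos v}" "x \<in> {pos u', pos v'}"
    using x edge_arc[OF assms(1)] edge_arc[OF assms(2)] by blast+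
  moreover have "{u, v, u', v'} \<subseteq> V"
    using edgeD assms(1,2) by blast
  ultimately show "x \<in> pos ` ({u, v} \<inter> {u', v'})"
    using inj_pos by (auto dest: inj_onD)
qed

definition edge_path :: "'a \<Rightarrow> 'a \<Rightarrow> real \<Rightarrow> complex" where
  "edge_path u v = (if pathstart (\<gamma> {u, v}) = pos u then \<gamma> {u, v} else reversepath (\<gamma> {u, v}))"

lemma edge_path:
  assumes "E u v"
  shows "arc (edge_path u v)" "pathstart (edge_path u v) = pos u" "pathfinish (edge_path u v) = pos v"
    and "path_image (edge_path u v) = path_image (\<gamma> {u, v})"
proof -
  have "pos u \<noteq> pos v"
    using edgeD[OF assms] inj_pos by (auto dest: inj_onD)
  then show "arc (edge_path u v)" "pathstart (edge_path u v) = pos u"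
    "pathfinish (edge_path u v) = pos v" "path_image (edge_path u v) = path_image (\<gamma> {u, v})"
    using edge_arc[OF assms] by (auto simp: edge_path_def arc_reversepath doubleton_eq_iff)
qed

fun walk_arc :: "'a list \<Rightarrow> real \<Rightarrow> complex" where
  "walk_arc [u, v] = edge_path u v"
| "walk_arc (u # v # w # xs) = edge_path u v +++ walk_arc (v # w # xs)"

lemma walk_arc:
  assumes "distinct xs" "successively E xs" "2 \<le> length xs"
  shows "arc (walk_arc xs) \<and> pathstart (walk_arc xs) = pos (hd xs) \<and>
    pathfinish (walk_arc xs) = pos (last xs) \<and>
    path_image (walk_arc xs) = (\<Union>e \<in> path_edges xs. path_image (\<gamma> e))"
  using assms
proof (induction xs rule: walk_arc.induct)
  case (1 u v)
  then show ?case
    using edge_path by simp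
next
  case (2 u v w xs)
  let ?rest = "v # w # xs"
  have uv: "E u v" and rest: "distinct ?rest" "successively E ?rest"
    using "2.prems" by simp_all
  have IH: "arc (walk_arc ?rest)" "pathstart (walk_arc ?rest) = pos v"
    "pathfinish (walk_arc ?rest) = pos (last ?rest)"
    "path_image (walk_arc ?rest) = (\<Union>e \<in> path_edges ?rest. path_image (\<gamma> e))"
    using "2.IH" rest by simp_all
  have "path_image (\<gamma> {u, v}) \<inter> path_image (\<gamma> e) \<subseteq> {pos v}" if e: "e \<in> path_edges ?rest" for e
  proof -
    obtain a b where ab: "e = {a, b}" "E a b" "a \<in> set ?rest" "b \<in> set ?rest"
      using path_edgesE[OF e rest(2)] .
    moreover have "u \<notin> set ?rest"
      using "2.prems"(1) by simp
    ultimately have "{u, v} \<noteq> {a, b}" "{u, v} \<inter> {a, b} \<subseteq> {v}"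
      by auto
    with edge_images_meet[OF uv ab(2)] ab(1) show ?thesis
      by blast
  qed
  then have "path_image (edge_path u v) \<inter> path_image (walk_arc ?rest) \<subseteq> {pathstart (walk_arc ?rest)}"
    unfolding IH(2,4) edge_path(4)[OF uv] Int_UN_distrib
    by (rule UN_least)
  then have "arc (edge_path u v +++ walk_arc ?rest)"
    using edge_path[OF uv] IH(1,2) by (intro arc_join) simp_all
  moreover have "path_image (edge_path u v +++ walk_arc ?rest) =
      (\<Union>e \<in> path_edges (u # ?rest). path_image (\<gamma> e))"
    using edge_path[OF uv] IH(2,4) by (simp add: path_image_join del: walk_arc.simps)
  moreover have "last (u # ?rest) = last ?rest" "hd (u # ?rest) = u"
    by simp_all
  ultimately show ?case
    unfolding walk_arc.simps(2) using edge_path[OF uv] IH(3)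
    by (simp only: pathstart_join pathfinish_join)
qed simp_all

lemma walk_arc_images_meet:
  assumes "distinct xs" "successively E xs" "2 \<le> length xs"
    and "distinct ys" "successively E ys" "2 \<le> length ys"
    and "path_edges xs \<inter> path_edges ys = {}"
  shows "path_image (walk_arc xs) \<inter> path_image (walk_arc ys) \<subseteq> pos ` (set xs \<inter> set ys)"
proof
  fix x
  assume x: "x \<in> path_image (walk_arc xs) \<inter> path_image (walk_arc ys)"
  have "path_image (walk_arc xs) = (\<Union>e \<in> path_edges xs. path_image (\<gamma> e))"
    "path_image (walk_arc ys) = (\<Union>e \<in> path_edges ys. path_image (\<gamma> e))"
    using walk_arc[OF assms(1-3)] walk_arc[OF assms(4-6)] by blast+
  then obtain e e' where e: "e \<in> path_edges xs" "e' \<in> path_edges ys"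
    and x: "x \<in> path_image (\<gamma> e)" "x \<in> path_image (\<gamma> e')"
    using x by auto
  obtain a b where ab: "e = {a, b}" "E a b" "a \<in> set xs" "b \<in> set xs"
    using path_edgesE[OF e(1) assms(2)] .
  obtain a' b' where ab': "e' = {a', b'}" "E a' b'" "a' \<in> set ys" "b' \<in> set ys"
    using path_edgesE[OF e(2) assms(5)] .
  have "e \<noteq> e'"
    using e assms(7) by blast
  then have "{a, b} \<noteq> {a', b'}"
    using ab(1) ab'(1) by simp
  then have "x \<in> pos ` ({a, b} \<inter> {a', b'})"
    using edge_images_meet[OF ab(2) ab'(2)] x ab(1) ab'(1) by blast
  moreover have "{a, b} \<inter> {a', b'} \<subseteq> set xs \<inter> set ys"
    using ab ab' by blast
  ultimately show "x \<in> pos ` (set xs \<inter> set ys)"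
    by (meson image_mono subsetD)
qed

end

lemma planar_graph_plane_embedding:
  assumes "simple_graph V E" "planar_graph V E"
  obtains pos \<gamma> where "plane_embedding V E pos \<gamma>"
proof -
  obtain pos :: "'a \<Rightarrow> complex" and \<gamma> where "inj_on pos V"
    and "\<forall>u v. E u v \<longrightarrow> arc (\<gamma> {u, v}) \<and>
        {pathstart (\<gamma> {u, v}), pathfinish (\<gamma> {u, v})} = {pos u, pos v} \<and>
        path_image (\<gamma> {u, v}) \<inter> pos ` V = {pos u, pos v}"
    and "\<forall>e \<in> edges E. \<forall>e' \<in> edges E. e \<noteq> e' \<longrightarrow>
        path_image (\<gamma> e) \<inter> path_image (\<gamma> e') \<subseteq> pos ` V"
    using assms(2) unfolding planar_graph_def by (elim exE conjE) (rule that)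
  with assms(1) have "plane_embedding V E pos \<gamma>"
    by unfold_locales simp_all
  then show ?thesis
    by (rule that)
qed


definition graph_path :: "('a \<Rightarrow> 'a \<Rightarrow> bool) \<Rightarrow> 'a list \<Rightarrow> 'a \<Rightarrow> 'a \<Rightarrow> bool" where
  "graph_path E xs u v \<longleftrightarrow> distinct xs \<and> successively E xs \<and> xs \<noteq> [] \<and> hd xs = u \<and> last xs = v"

lemma graph_path_length:
  assumes "graph_path E xs u v" "u \<noteq> v"
  shows "2 \<le> length xs"
  using assms by (cases xs rule: remdups_adj.cases) (auto simp: graph_path_def)

context plane_embedding
begin

lemma graph_path_subset:
  assumes "graph_path E xs u v" "u \<noteq> v"
  shows "set xs \<subseteq> V"
  using set_subset_path_edges[OF graph_path_length[OF assms]] assms(1)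
  by (auto simp: graph_path_def elim!: path_edgesE dest: edgeD)

lemma K33_drawing_of_subdivision:
  fixes X Y :: "3 \<Rightarrow> 'a" and P :: "3 \<Rightarrow> 3 \<Rightarrow> 'a list"
  assumes inj_X: "inj X" and inj_Y: "inj Y" and X_neq_Y: "\<And>i j. X i \<noteq> Y j"
    and paths: "\<And>i j. graph_path E (P i j) (X i) (Y j)"
    and internally_disjoint: "\<And>i j i' j'. (i, j) \<noteq> (i', j') \<Longrightarrow>
      set (P i j) \<inter> set (P i' j') \<subseteq> {X i, Y j} \<inter> {X i', Y j'}"
  shows "K33_drawing (\<lambda>i. pos (X i)) (\<lambda>j. pos (Y j)) (\<lambda>i j. walk_arc (P i j))"
proof -
  have P: "distinct (P i j)" "successively E (P i j)" "2 \<le> length (P i j)"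
    "pathstart (walk_arc (P i j)) = pos (X i)" "pathfinish (walk_arc (P i j)) = pos (Y j)" for i j
    using paths[of i j] graph_path_length[OF paths X_neq_Y] walk_arc
    by (auto simp: graph_path_def)
  have X_in_V: "X i \<in> V" and Y_in_V: "Y j \<in> V" for i j
    using graph_path_subset[OF paths X_neq_Y, of i j] paths[of i j] unfolding graph_path_def
    by (metis hd_in_set last_in_set subsetD)+
  have shared_vertex: "c = X i \<and> i = i' \<or> c = Y j \<and> j = j'"
    if "c \<in> {X i, Y j} \<inter> {X i', Y j'}" for c i j i' j'
    using that X_neq_Y[of i j'] X_neq_Y[of i' j] inj_eq[OF inj_X] inj_eq[OF inj_Y] by auto
  have no_common_edge: "path_edges (P i j) \<inter> path_edges (P i' j') = {}"
    if "(i, j) \<noteq> (i', j')" for i j i' j'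
  proof (rule ccontr)
    assume "path_edges (P i j) \<inter> path_edges (P i' j') \<noteq> {}"
    then obtain e where e: "e \<in> path_edges (P i j)" "e \<in> path_edges (P i' j')"
      by blast
    obtain a b where ab: "e = {a, b}" "E a b"
      using path_edgesE[OF e(1) P(2)] by metis
    have "a \<noteq> b"
      using edgeD[OF ab(2)] by blast
    moreover have "a \<in> {X i, Y j} \<inter> {X i', Y j'}" "b \<in> {X i, Y j} \<inter> {X i', Y j'}"
      using internally_disjoint[OF that] path_edges_subset[OF e(1)] path_edges_subset[OF e(2)] ab(1)
      by blast+
    ultimately show False
      using shared_vertex that by blast
  qed
  show ?thesis
  proof unfold_locales
    show "inj (\<lambda>i. pos (X i))" "inj (\<lambda>j. pos (Y j))"
      using inj_X inj_Y X_in_V Y_in_V inj_pos by (auto simp: inj_def inj_on_def)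
    show "pos (X i) \<noteq> pos (Y j)" for i j
      using X_neq_Y X_in_V Y_in_V inj_pos by (metis inj_onD)
    show "arc (walk_arc (P i j))" for i j
      using walk_arc[OF P(1-3)] by simp
    show "path_image (walk_arc (P i j)) \<inter> path_image (walk_arc (P i' j')) \<subseteq>
        {pos (X i), pos (Y j)} \<inter> {pos (X i'), pos (Y j')}"
      if "(i, j) \<noteq> (i', j')" for i j i' j'
    proof -
      have "path_image (walk_arc (P i j)) \<inter> path_image (walk_arc (P i' j')) \<subseteq>
          pos ` ({X i, Y j} \<inter> {X i', Y j'})"
        using walk_arc_images_meet[OF P(1-3) P(1-3) no_common_edge[OF that]]
          image_mono[OF internally_disjoint[OF that], of pos] by (rule order_trans)
      also have "\<dots> \<subseteq> pos ` {X i, Y j} \<inter> pos ` {X i', Y j'}"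
        by (rule image_Int_subset)
      finally show ?thesis
        by simp
    qed
  qed (use P in simp_all)
qed

end

theorem planar_graph_no_K33_subdivision:
  fixes X Y :: "3 \<Rightarrow> 'a" and P :: "3 \<Rightarrow> 3 \<Rightarrow> 'a list"
  assumes "simple_graph V E" "planar_graph V E"
    and "inj X" "inj Y" "\<And>i j. X i \<noteq> Y j"
    and "\<And>i j. graph_path E (P i j) (X i) (Y j)"
    and "\<And>i j i' j'. (i, j) \<noteq> (i', j') \<Longrightarrow>
      set (P i j) \<inter> set (P i' j') \<subseteq> {X i, Y j} \<inter> {X i', Y j'}"
  shows False
proof -
  obtain pos \<gamma> where "plane_embedding V E pos \<gamma>"
    using planar_graph_plane_embedding[OF assms(1,2)] .
  then show False
    using plane_embedding.K33_drawing_of_subdivision[OF _ assms(3-7)] no_K33_drawing by blast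
qed

section \<open>Counting\<close>

definition triple :: "'a \<Rightarrow> 'a \<Rightarrow> 'a \<Rightarrow> 3 \<Rightarrow> 'a" where
  "triple a b c i = (if i = 0 then a else if i = 1 then b else c)"

lemma triple_simps [simp]: "triple a b c 0 = a" "triple a b c 1 = b" "triple a b c 2 = c"
  by (simp_all add: triple_def)

lemma comp_triple: "f \<circ> triple a b c = triple (f a) (f b) (f c)"
  by (simp add: fun_eq_iff triple_def)

lemma range_triple: "range (triple a b c) = {a, b, c}"
  by (simp add: UNIV_3_eq)

lemma triple_in: "triple a b c i \<in> {a, b, c}"
  by (simp add: triple_def)

lemma inj_triple_iff: "inj (triple a b c) \<longleftrightarrow> a \<noteq> b \<and> a \<noteq> c \<and> b \<noteq> c"
  by (simp add: inj_on_iff_eq_card range_triple card_insert_if)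

lemma finite_degree:
  assumes "finite P"
  shows "finite {b. (a, b) \<in> P}" "finite {a. (a, b) \<in> P}"
  using finite_imageI[OF assms, of snd] finite_imageI[OF assms, of fst]
  by (force intro: finite_subset[rotated])+

lemma degree_mono:
  assumes "finite P" "Q \<subseteq> P"
  shows "card {b. (a, b) \<in> Q} \<le> card {b. (a, b) \<in> P}"
    and "card {a. (a, b) \<in> Q} \<le> card {a. (a, b) \<in> P}"
  using assms by (auto intro!: card_mono finite_degree)

lemma card_degree_sum:
  assumes "finite P"
  shows "card P = (\<Sum>a \<in> fst ` P. card {b. (a, b) \<in> P})"
proof -
  have "(SIGMA a : fst ` P. {b. (a, b) \<in> P}) = P"
    by force
  moreover have "card (SIGMA a : fst ` P. {b. (a, b) \<in> P}) = (\<Sum>a \<in> fst ` P. card {b. (a, b) \<in> P})"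
    by (rule card_SigmaI) (simp_all add: assms finite_degree)
  ultimately show ?thesis
    by simp
qed

lemma odd_card_degree_one:
  assumes "finite P" "odd (card P)" "\<And>a. card {b. (a, b) \<in> P} \<le> 2"
  obtains a b where "{b'. (a, b') \<in> P} = {b}"
proof -
  have "\<exists>a \<in> fst ` P. card {b. (a, b) \<in> P} \<noteq> 2"
  proof (rule ccontr)
    assume "\<not> ?thesis"
    then have "(\<Sum>a \<in> fst ` P. card {b. (a, b) \<in> P}) = (\<Sum>a \<in> fst ` P. 2)"
      by (intro sum.cong) auto
    then have "card P = 2 * card (fst ` P)"
      using card_degree_sum[OF assms(1)] by simp
    with assms(2) show False
      by simp
  qed
  then obtain a where a: "a \<in> fst ` P" "card {b. (a, b) \<in> P} \<noteq> 2"
    by blast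
  then have "{b. (a, b) \<in> P} \<noteq> {}"
    by force
  moreover have "finite {b. (a, b) \<in> P}"
    using finite_degree(1)[OF assms(1)] .
  ultimately have "card {b. (a, b) \<in> P} > 0"
    by (simp add: card_gt_0_iff)
  then have "card {b. (a, b) \<in> P} = 1"
    using a(2) assms(3)[of a] by linarith
  then show ?thesis
    using that by (elim card_1_singletonE) blast
qed

lemma independent_pair_among_three:
  fixes R :: "('a \<times> 'b) set"
  assumes "finite R" "3 \<le> card R"
    and deg_fst: "\<And>a. card {b. (a, b) \<in> R} \<le> 2" and deg_snd: "\<And>b. card {a. (a, b) \<in> R} \<le> 2"
  obtains s t where "s \<in> R" "t \<in> R" "fst s \<noteq> fst t" "snd s \<noteq> snd t"
proof -
  obtain r1 r2 r3 where r123: "r1 \<in> R" "r2 \<in> R" "r3 \<in> R" "r1 \<noteq> r2" "r1 \<noteq> r3" "r2 \<noteq> r3"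
    using obtain_subset_with_card_n[OF assms(2)] by (metis card_3_iff insert_subset)
  obtain a1 b1 a2 b2 a3 b3 where "r1 = (a1, b1)" "r2 = (a2, b2)" "r3 = (a3, b3)"
    by (metis surj_pair)
  with r123 have r: "(a1, b1) \<in> R" "(a2, b2) \<in> R" "(a3, b3) \<in> R"
    and distinct: "(a1, b1) \<noteq> (a2, b2)" "(a1, b1) \<noteq> (a3, b3)" "(a2, b2) \<noteq> (a3, b3)"
    by simp_all
  have "\<not> (a1 = a2 \<and> a2 = a3)"
  proof
    assume "a1 = a2 \<and> a2 = a3"
    then have "{b1, b2, b3} \<subseteq> {b. (a1, b) \<in> R}" "card {b1, b2, b3} = 3"
      using r distinct by auto
    then have "3 \<le> card {b. (a1, b) \<in> R}"
      using card_mono[OF finite_degree(1)[OF assms(1)]] by metis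
    with deg_fst[of a1] show False
      by simp
  qed
  moreover have "\<not> (b1 = b2 \<and> b2 = b3)"
  proof
    assume "b1 = b2 \<and> b2 = b3"
    then have "{a1, a2, a3} \<subseteq> {a. (a, b1) \<in> R}" "card {a1, a2, a3} = 3"
      using r distinct by auto
    then have "3 \<le> card {a. (a, b1) \<in> R}"
      using card_mono[OF finite_degree(2)[OF assms(1)]] by metis
    with deg_snd[of b1] show False
      by simp
  qed
  ultimately have "a1 \<noteq> a2 \<and> b1 \<noteq> b2 \<or> a1 \<noteq> a3 \<and> b1 \<noteq> b3 \<or> a2 \<noteq> a3 \<and> b2 \<noteq> b3"
    using distinct by auto
  then show ?thesis
    using that[OF r(1) r(2)] that[OF r(1) r(3)] that[OF r(2) r(3)] by auto
qed

lemma matching_of_three: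
  fixes P :: "('a \<times> 'b) set"
  assumes "finite P" "5 \<le> card P"
    and deg_fst: "\<And>a. card {b. (a, b) \<in> P} \<le> 2" and deg_snd: "\<And>b. card {a. (a, b) \<in> P} \<le> 2"
  obtains m :: "3 \<Rightarrow> 'a \<times> 'b" where "range m \<subseteq> P" "inj (fst \<circ> m)" "inj (snd \<circ> m)"
proof -
  \<comment> \<open>Among five pairs some first coordinate \<open>a0\<close> occurs only once, in \<open>(a0, b0)\<close>; at most
    two pairs meet \<open>(a0, b0)\<close>, and among the remaining three pairs two are disjoint.\<close>
  obtain Q where Q: "Q \<subseteq> P" "card Q = 5" "finite Q"
    using obtain_subset_with_card_n[OF assms(2)] .
  have deg_fst_Q: "card {b. (a, b) \<in> Q} \<le> 2" for a
    using deg_fst[of a] degree_mono(1)[OF assms(1) Q(1)] order_trans by blast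
  have deg_snd_Q: "card {a. (a, b) \<in> Q} \<le> 2" for b
    using deg_snd[of b] degree_mono(2)[OF assms(1) Q(1)] order_trans by blast
  have "odd (card Q)"
    using Q(2) by simp
  then obtain a0 b0 where a0: "{b. (a0, b) \<in> Q} = {b0}"
    using odd_card_degree_one[OF Q(3) _ deg_fst_Q] by metis
  define R where "R = {r \<in> Q. fst r \<noteq> a0 \<and> snd r \<noteq> b0}"
  have a0_unique: "(a0, b) \<in> Q \<Longrightarrow> b = b0" for b
    using a0 by blast
  have "Q - R \<subseteq> {a. (a, b0) \<in> Q} \<times> {b0}"
    using a0_unique by (force simp: R_def)
  then have "card (Q - R) \<le> card ({a. (a, b0) \<in> Q} \<times> {b0})"
    by (rule card_mono[rotated]) (simp add: finite_degree(2)[OF Q(3)])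
  also have "\<dots> \<le> 2"
    using deg_snd_Q[of b0] by (simp add: card_cartesian_product)
  finally have "card (Q - R) \<le> 2" .
  moreover have "R \<subseteq> Q"
    by (auto simp: R_def)
  ultimately have "3 \<le> card R"
    using Q(2,3) card_Diff_subset[of R Q] finite_subset[of R Q] card_mono[of Q R] by linarith
  moreover have "card {b. (a, b) \<in> R} \<le> 2" "card {a. (a, b) \<in> R} \<le> 2" for a b
    using deg_fst_Q[of a] deg_snd_Q[of b] degree_mono(1)[OF Q(3) \<open>R \<subseteq> Q\<close>, of a]
      degree_mono(2)[OF Q(3) \<open>R \<subseteq> Q\<close>, of b] by linarith+
  ultimately obtain s t where st: "s \<in> R" "t \<in> R" "fst s \<noteq> fst t" "snd s \<noteq> snd t"
    using independent_pair_among_three finite_subset[OF \<open>R \<subseteq> Q\<close> Q(3)] by blast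
  have "(a0, b0) \<in> Q"
    using a0 by blast
  then have "range (triple (a0, b0) s t) \<subseteq> P"
    using st(1,2) \<open>R \<subseteq> Q\<close> Q(1) by (auto simp: range_triple)
  moreover have "inj (fst \<circ> triple (a0, b0) s t)" "inj (snd \<circ> triple (a0, b0) s t)"
    using st by (auto simp: comp_triple inj_triple_iff R_def)
  ultimately show ?thesis
    by (rule that)
qed

lemma card_edges_between_self:
  assumes "simple_graph V E" "T \<subseteq> V"
  shows "2 * card (edges_between E T T) = (\<Sum>v \<in> T. card (nbhd V E v \<inter> T))"
proof -
  let ?F = "edges_between E T T"
  have fin_T: "finite T"
    using assms finite_subset by (auto simp: simple_graph_def)
  have F_subset: "e \<subseteq> T" if "e \<in> ?F" for e
    using that by (auto simp: edges_between_def)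
  then have "finite ?F"
    using fin_T by (meson Pow_iff finite_Pow_iff finite_subset subsetI)
  have "card {v \<in> T. v \<in> e} = 2" if "e \<in> ?F" for e
  proof -
    obtain u v where "e = {u, v}" "E u v"
      using \<open>e \<in> ?F\<close> by (auto simp: edges_between_def)
    moreover have "u \<noteq> v"
      using \<open>E u v\<close> assms(1) by (auto simp: simple_graph_def)
    moreover have "{v \<in> T. v \<in> e} = e"
      using F_subset[OF that] by blast
    ultimately show ?thesis
      by simp
  qed
  then have "(\<Sum>v \<in> T. card {e \<in> ?F. v \<in> e}) = 2 * card ?F"
    using sum_multicount[OF fin_T \<open>finite ?F\<close>, of "\<lambda>v e. v \<in> e"] by blast
  moreover have "card {e \<in> ?F. v \<in> e} = card (nbhd V E v \<inter> T)" if "v \<in> T" for v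
  proof -
    have "{e \<in> ?F. v \<in> e} = (\<lambda>w. {v, w}) ` (nbhd V E v \<inter> T)"
      using that assms(1) by (auto simp: edges_between_def nbhd_def simple_graph_def)
    moreover have "inj_on (\<lambda>w. {v, w}) (nbhd V E v \<inter> T)"
      by (auto simp: inj_on_def doubleton_eq_iff)
    ultimately show ?thesis
      by (simp add: card_image)
  qed
  ultimately show ?thesis
    by simp
qed

section \<open>Tumors\<close>

lemma planar_tumor_graphD:
  assumes "planar_tumor_graph V E B S"
  shows "tumor_graph V E B S" "simple_graph V E" "planar_graph V E"
  using assms by (simp_all add: planar_tumor_graph_def tumor_graph_def)

lemma simple_graph_sym: "simple_graph V E \<Longrightarrow> E u v \<Longrightarrow> E v u"
  by (simp add: simple_graph_def)

lemma tumor_memD: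
  assumes "tumor_graph V E B S" "s \<in> tumor V E B S x y"
  shows "s \<in> S" "s \<notin> B" "s \<in> V" "E s x" "E s y"
proof -
  have "s \<in> S" "nbhd V E s \<inter> B = {x, y}"
    using assms(2) by (simp_all add: tumor_def)
  then show "s \<in> S" "s \<notin> B" "s \<in> V" "E s x" "E s y"
    using assms(1) by (auto simp: tumor_graph_def nbhd_def)
qed

lemma finite_tumor:
  assumes "tumor_graph V E B S"
  shows "finite (tumor V E B S x y)"
proof (rule finite_subset)
  show "tumor V E B S x y \<subseteq> V"
    using tumor_memD(3)[OF assms] by blast
  show "finite V"
    using assms by (simp add: tumor_graph_def simple_graph_def)
qed

lemma tumors_disjoint: "{x, y} \<noteq> {z, w} \<Longrightarrow> tumor V E B S x y \<inter> tumor V E B S z w = {}"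
  by (auto simp: tumor_def)

theorem card_nbhd_inter_tumor_le_2:
  assumes "planar_tumor_graph V E B S" "x \<in> B" "y \<in> B" "x \<noteq> y" "z \<in> V - {x, y}"
  shows "card (nbhd V E z \<inter> tumor V E B S x y) \<le> 2"
proof (rule ccontr)
  let ?N = "nbhd V E z \<inter> tumor V E B S x y"
  note tg = planar_tumor_graphD(1)[OF assms(1)] and sg = planar_tumor_graphD(2)[OF assms(1)]
  assume "\<not> ?thesis"
  then have "card (UNIV :: 3 set) \<le> card ?N"
    by simp
  moreover have "finite ?N"
    using finite_tumor[OF tg] by blast
  ultimately obtain s :: "3 \<Rightarrow> 'a" where "range s \<subseteq> ?N" "inj s"
    using card_le_inj[of "UNIV :: 3 set" ?N] by auto
  then have inj_s: "inj s" and s_in: "s j \<in> ?N" for j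
    by auto
  have s: "E z (s j)" "s j \<notin> B" "E x (s j)" "E y (s j)" for j
    using s_in[of j] tumor_memD[OF tg, of "s j" x y] simple_graph_sym[OF sg] by (auto simp: nbhd_def)
  define X where "X = triple x y z"
  have X_in: "X i \<in> {x, y, z}" for i
    unfolding X_def by (rule triple_in)
  show False
  proof (rule planar_graph_no_K33_subdivision[OF sg planar_tumor_graphD(3)[OF assms(1)],
        of X s "\<lambda>i j. [X i, s j]"])
    show "inj X"
      using assms(4,5) by (auto simp: X_def inj_triple_iff)
    show "X i \<noteq> s j" for i j
      using X_in[of i] assms(2,3) s(1,2)[of j] sg by (auto simp: simple_graph_def)
    then show "graph_path E [X i, s j] (X i) (s j)" for i j
      using X_in[of i] s[of j] by (auto simp: graph_path_def)
  qed (use inj_s in auto)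
qed

theorem card_edges_within_tumor_le:
  assumes "planar_tumor_graph V E B S" "x \<in> B" "y \<in> B" "x \<noteq> y"
  shows "card (edges_between E (tumor V E B S x y) (tumor V E B S x y)) \<le> card (tumor V E B S x y)"
proof -
  let ?T = "tumor V E B S x y"
  note tg = planar_tumor_graphD(1)[OF assms(1)]
  have "?T \<subseteq> V"
    using tumor_memD(3)[OF tg] by blast
  then have "2 * card (edges_between E ?T ?T) = (\<Sum>v \<in> ?T. card (nbhd V E v \<inter> ?T))"
    by (rule card_edges_between_self[OF planar_tumor_graphD(2)[OF assms(1)]])
  also have "\<dots> \<le> (\<Sum>v \<in> ?T. 2)"
  proof (rule sum_mono)
    fix v
    assume "v \<in> ?T"
    then have "v \<in> V - {x, y}"
      using tumor_memD[OF tg] assms(2,3) by blast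
    then show "card (nbhd V E v \<inter> ?T) \<le> 2"
      by (rule card_nbhd_inter_tumor_le_2[OF assms])
  qed
  finally show ?thesis
    by simp
qed

lemma matching_between_tumors:
  assumes "planar_tumor_graph V E B S" "x \<in> B" "y \<in> B" "z \<in> B" "w \<in> B" "x \<noteq> y" "z \<noteq> w"
    and "5 \<le> card (edges_between E (tumor V E B S x y) (tumor V E B S z w))"
  obtains a b :: "3 \<Rightarrow> 'a" where "inj a" "inj b"
    "\<And>j. a j \<in> tumor V E B S x y" "\<And>j. b j \<in> tumor V E B S z w" "\<And>j. E (a j) (b j)"
proof -
  let ?T1 = "tumor V E B S x y" and ?T2 = "tumor V E B S z w"
  note tg = planar_tumor_graphD(1)[OF assms(1)] and sg = planar_tumor_graphD(2)[OF assms(1)]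
  define P where "P = {(a, b). a \<in> ?T1 \<and> b \<in> ?T2 \<and> E a b}"
  have "P \<subseteq> ?T1 \<times> ?T2"
    by (auto simp: P_def)
  then have "finite P"
    by (rule finite_subset) (simp add: finite_tumor[OF tg])
  have "edges_between E ?T1 ?T2 = (\<lambda>(a, b). {a, b}) ` P"
    by (auto simp: edges_between_def P_def)
  then have "5 \<le> card P"
    using card_image_le[OF \<open>finite P\<close>, of "\<lambda>(a, b). {a, b}"] assms(8) by simp
  moreover have "card {b. (a, b) \<in> P} \<le> 2" for a
  proof (cases "a \<in> ?T1")
    case True
    then have "card (nbhd V E a \<inter> ?T2) \<le> 2"
      using card_nbhd_inter_tumor_le_2[OF assms(1,4,5,7)] tumor_memD[OF tg] assms(4,5) by blast
    moreover have "{b. (a, b) \<in> P} \<subseteq> nbhd V E a \<inter> ?T2"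
      using tumor_memD(3)[OF tg] by (auto simp: P_def nbhd_def)
    ultimately show ?thesis
      using card_mono[OF finite_tumor[OF tg, THEN finite_Int[OF disjI2]]] by (meson order_trans)
  qed (simp add: P_def)
  moreover have "card {a. (a, b) \<in> P} \<le> 2" for b
  proof (cases "b \<in> ?T2")
    case True
    then have "card (nbhd V E b \<inter> ?T1) \<le> 2"
      using card_nbhd_inter_tumor_le_2[OF assms(1,2,3,6)] tumor_memD[OF tg] assms(2,3) by blast
    moreover have "{a. (a, b) \<in> P} \<subseteq> nbhd V E b \<inter> ?T1"
      using tumor_memD(3)[OF tg] simple_graph_sym[OF sg] by (auto simp: P_def nbhd_def)
    ultimately show ?thesis
      using card_mono[OF finite_tumor[OF tg, THEN finite_Int[OF disjI2]]] by (meson order_trans)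
  qed (simp add: P_def)
  ultimately obtain m :: "3 \<Rightarrow> 'a \<times> 'a" where m: "range m \<subseteq> P" "inj (fst \<circ> m)" "inj (snd \<circ> m)"
    using matching_of_three[OF \<open>finite P\<close>] by blast
  have "fst (m j) \<in> ?T1" "snd (m j) \<in> ?T2" "E (fst (m j)) (snd (m j))" for j
    using m(1) by (auto simp: P_def case_prod_unfold)
  with m(2,3) show ?thesis
    using that[of "fst \<circ> m" "snd \<circ> m"] by simp
qed

lemma no_matching_between_tumors:
  fixes a b :: "3 \<Rightarrow> 'a"
  assumes "planar_tumor_graph V E B S" "x \<in> B" "y \<in> B" "z \<in> B" "w \<in> B"
    and "x \<noteq> y" "z \<noteq> w" "{x, y} \<noteq> {z, w}"
    and inj_a: "inj a" and inj_b: "inj b"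
    and ab: "\<And>j. a j \<in> tumor V E B S x y" "\<And>j. b j \<in> tumor V E B S z w" "\<And>j. E (a j) (b j)"
  shows False
proof -
  note tg = planar_tumor_graphD(1)[OF assms(1)] and sg = planar_tumor_graphD(2)[OF assms(1)]
  note E_sym = simple_graph_sym[OF sg]
  obtain t where t: "t \<in> {z, w}" "t \<notin> {x, y}"
    using assms(6,7,8) by blast
  define X where "X = triple x y t"
  have X_in: "X i \<in> {x, y, t}" for i
    unfolding X_def by (rule triple_in)
  have a_props: "a j \<notin> B" "E x (a j)" "E y (a j)" for j
    using tumor_memD[OF tg ab(1)[of j]] E_sym by simp_all
  have b_props: "b j \<notin> B" "E t (b j)" for j
    using tumor_memD[OF tg ab(2)[of j]] E_sym t(1) by auto
  have a_neq_b: "a j' \<noteq> b j" for j j'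
    using tumors_disjoint[OF assms(8), of V E B S] ab(1)[of j'] ab(2)[of j] by (metis IntI empty_iff)
  define Q where "Q i j = (if i = 2 then [t, b j, a j] else [X i, a j])" for i j
  have set_Q: "set (Q i j) = {X i, a j} \<union> (if i = 2 then {b j} else {})" for i j
    by (cases "i = 2") (auto simp: Q_def X_def)
  have b_new: "b k \<noteq> X l" "X l \<noteq> b k" "b k \<noteq> a l'" "a l' \<noteq> b k" for k l l'
    using X_in[of l] b_props(1)[of k] a_neq_b[of l' k] assms(2,3,4,5) t(1) by auto
  show False
  proof (rule planar_graph_no_K33_subdivision[OF sg planar_tumor_graphD(3)[OF assms(1)], of X a Q])
    show "inj X"
      using assms(6) t(2) by (auto simp: X_def inj_triple_iff)
    show X_neq_a: "X i \<noteq> a j" for i j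
      using X_in[of i] a_props(1)[of j] assms(2,3) t(1) assms(4,5) by auto
    show "graph_path E (Q i j) (X i) (a j)" for i j
    proof (cases "i = 2")
      case True
      then show ?thesis
        using b_props[of j] ab(3)[of j] E_sym a_neq_b[of j j] X_neq_a[of i j] t(1) assms(4,5)
        by (auto simp: graph_path_def Q_def X_def)
    next
      case False
      then have "i = 0 \<or> i = 1"
        using UNIV_3_eq by blast
      then have "X i \<in> {x, y}"
        by (auto simp: X_def)
      then show ?thesis
        using False a_props[of j] X_neq_a[of i j] by (auto simp: graph_path_def Q_def)
    qed
    show "set (Q i j) \<inter> set (Q i' j') \<subseteq> {X i, a j} \<inter> {X i', a j'}"
      if "(i, j) \<noteq> (i', j')" for i j i' j'
      using that inj_eq[OF inj_b] b_new by (auto simp: set_Q split: if_splits)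
  qed (rule inj_a)
qed

theorem card_edges_between_tumors_le_4:
  assumes "planar_tumor_graph V E B S" "x \<in> B" "y \<in> B" "z \<in> B" "w \<in> B"
    and "x \<noteq> y" "z \<noteq> w" "{x, y} \<noteq> {z, w}"
  shows "card (edges_between E (tumor V E B S x y) (tumor V E B S z w)) \<le> 4"
proof (rule ccontr)
  assume "\<not> ?thesis"
  then have "5 \<le> card (edges_between E (tumor V E B S x y) (tumor V E B S z w))"
    by simp
  then obtain a b :: "3 \<Rightarrow> 'a" where "inj a" "inj b"
    "\<And>j. a j \<in> tumor V E B S x y" "\<And>j. b j \<in> tumor V E B S z w" "\<And>j. E (a j) (b j)"
    using matching_between_tumors[OF assms(1-7)] by metis
  then show False
    by (rule no_matching_between_tumors[OF assms])
qed

theorem proposition3p8: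
  fixes V B S :: "'a set" and E :: "'a \<Rightarrow> 'a \<Rightarrow> bool"
  assumes "planar_tumor_graph V E B S"
  shows "(\<forall>x \<in> B. \<forall>y \<in> B. x \<noteq> y \<longrightarrow>
            (\<forall>z \<in> V - {x, y}. card (nbhd V E z \<inter> tumor V E B S x y) \<le> 2) \<and>
            card (edges_between E (tumor V E B S x y) (tumor V E B S x y))
              \<le> card (tumor V E B S x y))
       \<and> (\<forall>x \<in> B. \<forall>y \<in> B. \<forall>z \<in> B. \<forall>w \<in> B.
            x \<noteq> y \<longrightarrow> z \<noteq> w \<longrightarrow> {x, y} \<noteq> {z, w} \<longrightarrow>
            card (edges_between E (tumor V E B S x y) (tumor V E B S z w)) \<le> 4)"
proof (intro conjI ballI impI)
  fix x y z
  assume "x \<in> B" "y \<in> B" "x \<noteq> y" "z \<in> V - {x, y}"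
  then show "card (nbhd V E z \<inter> tumor V E B S x y) \<le> 2"
    by (rule card_nbhd_inter_tumor_le_2[OF assms])
next
  fix x y
  assume "x \<in> B" "y \<in> B" "x \<noteq> y"
  then show "card (edges_between E (tumor V E B S x y) (tumor V E B S x y)) \<le> card (tumor V E B S x y)"
    by (rule card_edges_within_tumor_le[OF assms])
next
  fix x y z w
  assume "x \<in> B" "y \<in> B" "z \<in> B" "w \<in> B" "x \<noteq> y" "z \<noteq> w" "{x, y} \<noteq> {z, w}"
  then show "card (edges_between E (tumor V E B S x y) (tumor V E B S z w)) \<le> 4"
    by (rule card_edges_between_tumors_le_4[OF assms])
qed

end
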